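(* Let $n,m$ be integers with $6 \le n \le m \le 2n-1$. If $n+m \equiv 0 \pmod 3$ or $n+m \equiv 2 \pmod 3$, then \[\gamma^{\rm ID}(K_n\times K_m) = \left\lfloor \frac{2m+2n}{3}\right\rfloor.\]
   Context: For a graph $G$ and vertex $x$, $N[x]$ denotes the closed neighborhood of $x$. A set $C \subseteq V(G)$ is an identifying code (ID code) of $G$ if $C$ is a dominating set of $G$ and $N[x]\cap C \ne N[y]\cap C$ for every pair of distinct vertices $x,y$. $\gamma^{\rm ID}(G)$ is the minimum cardinality of an ID code of $G$. The direct product $G_1\times G_2$ has vertex set $V(G_1)\times V(G_2)$, with $(u_1,u_2)$ adjacent to $(v_1,v_2)$ iff $u_1v_1\in E(G_1)$ and $u_2v_2 \in E(G_2)$. $K_n$ is the complete graph on vertex set $[n]=\{1,\dots,n\}$; thus in $K_n\times K_m$ two vertices are adjacent iff they differ in both coordinates. *)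

theory Defs
  imports Main
begin

text \<open>A (simple) graph is given by a vertex set V and a symmetric irreflexive
adjacency relation E.\<close>

definition closed_nbhd :: "'a set \<Rightarrow> ('a \<Rightarrow> 'a \<Rightarrow> bool) \<Rightarrow> 'a \<Rightarrow> 'a set" where
  "closed_nbhd V E x = {y \<in> V. y = x \<or> E x y}"

definition is_id_code :: "'a set \<Rightarrow> ('a \<Rightarrow> 'a \<Rightarrow> bool) \<Rightarrow> 'a set \<Rightarrow> bool" where
  "is_id_code V E C \<longleftrightarrow> C \<subseteq> V
     \<and> (\<forall>x\<in>V. closed_nbhd V E x \<inter> C \<noteq> {})
     \<and> (\<forall>x\<in>V. \<forall>y\<in>V. x \<noteq> y \<longrightarrow> closed_nbhd V E x \<inter> C \<noteq> closed_nbhd V E y \<inter> C)"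

definition gamma_ID :: "'a set \<Rightarrow> ('a \<Rightarrow> 'a \<Rightarrow> bool) \<Rightarrow> nat" where
  "gamma_ID V E = Min {card C | C. is_id_code V E C}"

definition K_vert :: "nat \<Rightarrow> nat set" where
  "K_vert n = {1..n}"

definition K_adj :: "nat \<Rightarrow> nat \<Rightarrow> bool" where
  "K_adj u v \<longleftrightarrow> u \<noteq> v"

definition dprod_vert :: "'a set \<Rightarrow> 'b set \<Rightarrow> ('a \<times> 'b) set" where
  "dprod_vert V1 V2 = V1 \<times> V2"

definition dprod_adj :: "('a \<Rightarrow> 'a \<Rightarrow> bool) \<Rightarrow> ('b \<Rightarrow> 'b \<Rightarrow> bool) \<Rightarrow> 'a \<times> 'b \<Rightarrow> 'a \<times> 'b \<Rightarrow> bool" where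
  "dprod_adj E1 E2 u v \<longleftrightarrow> E1 (fst u) (fst v) \<and> E2 (snd u) (snd v)"

end

theory Submission
  imports Defs
begin

text \<open>
  Two vertices of K_n x K_m are adjacent iff they differ in both
  coordinates, so a vertex x sees exactly the code vertices off the row and column of x
  (and x itself).  Everything is therefore phrased in terms of the rows and columns of
  a code C, i.e. the sets of code vertices sharing a coordinate.

  Lower bound: a separating code C satisfies 2(n + m) <= 3|C| + 2.  Separation forces a
  few local facts (at most one empty row, at most one empty column, at most one code
  vertex alone in both its row and column, ...).  A double count of the code vertices
  lying in columns with a single code vertex, together with elementary statistics of the
  row and column degrees, then reduces the bound to linear arithmetic.

  Upper bound: writing n = a + 2b + k and m = 2a + b + k with k <= 1, an explicit code
  grid_code a b k of size 2a + 2b + k = floor((2m + 2n)/3) is built, and shown to be an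
  identifying code via a general sufficient criterion on its rows and columns.
\<close>

definition code_nbhd :: "(nat \<times> nat) set \<Rightarrow> nat \<times> nat \<Rightarrow> (nat \<times> nat) set" where
  "code_nbhd C x = {y \<in> C. y = x \<or> (fst y \<noteq> fst x \<and> snd y \<noteq> snd x)}"

lemma Kprod_nbhd_code:
  assumes "C \<subseteq> {1..n} \<times> {1..m}"
  shows "closed_nbhd (dprod_vert (K_vert n) (K_vert m)) (dprod_adj K_adj K_adj) x \<inter> C = code_nbhd C x"
  using assms unfolding closed_nbhd_def code_nbhd_def dprod_vert_def K_vert_def dprod_adj_def K_adj_def
  by auto

lemma id_code_Kprod_iff:
  "is_id_code (dprod_vert (K_vert n) (K_vert m)) (dprod_adj K_adj K_adj) C \<longleftrightarrow>
    C \<subseteq> {1..n} \<times> {1..m} \<and> (\<forall>x \<in> {1..n} \<times> {1..m}. code_nbhd C x \<noteq> {}) \<and>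
    (\<forall>x \<in> {1..n} \<times> {1..m}. \<forall>y \<in> {1..n} \<times> {1..m}. x \<noteq> y \<longrightarrow> code_nbhd C x \<noteq> code_nbhd C y)"
  unfolding is_id_code_def using Kprod_nbhd_code[of C n m]
  by (auto simp: dprod_vert_def K_vert_def)

definition row :: "('a \<times> 'b) set \<Rightarrow> 'a \<Rightarrow> 'b set" where
  "row C i = {j. (i, j) \<in> C}"

definition col :: "('a \<times> 'b) set \<Rightarrow> 'b \<Rightarrow> 'a set" where
  "col C j = {i. (i, j) \<in> C}"

lemma mem_row [simp]: "j \<in> row C i \<longleftrightarrow> (i, j) \<in> C"
  by (simp add: row_def)

lemma mem_col [simp]: "i \<in> col C j \<longleftrightarrow> (i, j) \<in> C"
  by (simp add: col_def)

lemma row_eqD: "row C i = B \<Longrightarrow> (i, j) \<in> C \<longleftrightarrow> j \<in> B"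
  by auto

lemma col_eqD: "col C j = A \<Longrightarrow> (i, j) \<in> C \<longleftrightarrow> i \<in> A"
  by auto

text \<open>Transposition exchanges rows and columns; it lets every statement about rows be
  reused for columns.\<close>

lemma row_swap [simp]: "row (prod.swap ` C) = col C"
  by (auto simp: row_def col_def)

lemma col_swap [simp]: "col (prod.swap ` C) = row C"
  by (auto simp: row_def col_def)

lemma finite_row:
  assumes "finite C"
  shows "finite (row C i)"
proof -
  have "row C i \<subseteq> snd ` C" by (auto intro: image_eqI[where x = "(i, _)"])
  then show ?thesis using assms by (rule finite_surj[rotated])
qed

lemma sum_by_rows:
  assumes "C \<subseteq> A \<times> B" "finite A" "finite B"
  shows "sum f C = (\<Sum>i\<in>A. \<Sum>j\<in>row C i. f (i, j))"
proof -
  have "C = Sigma A (row C)" using assms(1) by auto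
  moreover have "finite (row C i)" for i
    using assms by (intro finite_row) (auto intro: finite_subset)
  ultimately show ?thesis using assms(2) by (simp add: sum.Sigma)
qed

lemma sum_by_cols:
  assumes "C \<subseteq> A \<times> B" "finite A" "finite B"
  shows "sum f C = (\<Sum>j\<in>B. \<Sum>i\<in>col C j. f (i, j))"
proof -
  have "sum f C = sum (f \<circ> prod.swap) (prod.swap ` C)"
    by (simp add: sum.reindex comp_def)
  also have "\<dots> = (\<Sum>j\<in>B. \<Sum>i\<in>col C j. f (i, j))"
    using sum_by_rows[of "prod.swap ` C" B A "f \<circ> prod.swap"] assms by fastforce
  finally show ?thesis .
qed

definition rdeg :: "('a \<times> 'b) set \<Rightarrow> 'a \<Rightarrow> nat" where
  "rdeg C i = card (row C i)"

definition cdeg :: "('a \<times> 'b) set \<Rightarrow> 'b \<Rightarrow> nat" where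
  "cdeg C j = card (col C j)"

lemma rdeg_swap [simp]: "rdeg (prod.swap ` C) = cdeg C"
  by (simp add: rdeg_def cdeg_def fun_eq_iff)

lemma cdeg_swap [simp]: "cdeg (prod.swap ` C) = rdeg C"
  by (simp add: rdeg_def cdeg_def fun_eq_iff)

lemma card_by_rows:
  fixes C :: "(nat \<times> nat) set"
  assumes "C \<subseteq> {1..n} \<times> {1..m}"
  shows "card C = sum (rdeg C) {1..n}"
  using sum_by_rows[OF assms finite_atLeastAtMost finite_atLeastAtMost, of "\<lambda>_. 1::nat"]
  by (simp add: rdeg_def)

definition isolated :: "('a \<times> 'b) set \<Rightarrow> 'a \<Rightarrow> 'b \<Rightarrow> bool" where
  "isolated C i j \<longleftrightarrow> row C i = {j} \<and> col C j = {i}"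

definition isolated_set :: "('a \<times> 'b) set \<Rightarrow> ('a \<times> 'b) set" where
  "isolated_set C = {(i, j). isolated C i j}"

lemma isolated_mem: "isolated C i j \<Longrightarrow> (i, j) \<in> C"
  unfolding isolated_def by (metis mem_row singletonI)

lemma isolated_swap [simp]: "isolated (prod.swap ` C) j i \<longleftrightarrow> isolated C i j"
  by (auto simp: isolated_def)

lemma card_isolated_set_swap: "card (isolated_set (prod.swap ` C)) = card (isolated_set C)"
proof -
  have "isolated_set (prod.swap ` C) = prod.swap ` isolated_set C"
    by (auto simp: isolated_set_def image_iff)
  then show ?thesis by (simp add: card_image)
qed

lemma card_one_memberD: "card S = 1 \<Longrightarrow> x \<in> S \<Longrightarrow> S = {x}"
  by (metis card_1_singletonE singletonD)

definition count_deg :: "'a set \<Rightarrow> ('a \<Rightarrow> nat) \<Rightarrow> nat \<Rightarrow> nat" where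
  "count_deg A d k = card {i \<in> A. d i = k}"

definition count_heavy :: "'a set \<Rightarrow> ('a \<Rightarrow> nat) \<Rightarrow> nat" where
  "count_heavy A d = card {i \<in> A. 2 \<le> d i}"

definition sum_heavy :: "'a set \<Rightarrow> ('a \<Rightarrow> nat) \<Rightarrow> nat" where
  "sum_heavy A d = (\<Sum>i \<in> {i \<in> A. 2 \<le> d i}. d i)"

lemma card_filter_as_sum: "finite A \<Longrightarrow> card {i \<in> A. P i} = (\<Sum>i\<in>A. if P i then 1 else 0)"
  by (simp add: sum.inter_filter[symmetric])

text \<open>The linear relations between these statistics used in the final count; the third
  one says that heavy indices of degree at least 3 contribute at least 3 each.\<close>

lemma degree_statistics:
  fixes d :: "'a \<Rightarrow> nat"
  assumes A: "finite A"
  shows "card A = count_deg A d 0 + count_deg A d 1 + count_heavy A d"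
    and "sum d A = count_deg A d 1 + sum_heavy A d"
    and "3 * count_heavy A d \<le> sum_heavy A d + count_deg A d 2"
    and "2 * count_heavy A d \<le> sum_heavy A d"
    and "count_heavy A d = 0 \<Longrightarrow> sum_heavy A d = 0"
proof -
  note defs = count_deg_def count_heavy_def sum_heavy_def card_filter_as_sum[OF A]
    sum.inter_filter[OF A]
  show "card A = count_deg A d 0 + count_deg A d 1 + count_heavy A d"
    unfolding defs card_eq_sum sum.distrib[symmetric] by (rule sum.cong) auto
  show "sum d A = count_deg A d 1 + sum_heavy A d"
    unfolding defs sum.distrib[symmetric] by (rule sum.cong) auto
  show "3 * count_heavy A d \<le> sum_heavy A d + count_deg A d 2"
    unfolding defs sum_distrib_left sum.distrib[symmetric] by (rule sum_mono) auto
  show "2 * count_heavy A d \<le> sum_heavy A d"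
    unfolding defs sum_distrib_left by (rule sum_mono) auto
  show "sum_heavy A d = 0" if "count_heavy A d = 0"
    using that A unfolding count_heavy_def sum_heavy_def by simp
qed

lemma count_empty_rows:
  "finite C \<Longrightarrow> count_deg A (rdeg C) 0 = card {i \<in> A. row C i = {}}"
  unfolding count_deg_def rdeg_def by (metis (no_types, lifting) card_0_eq finite_row)

section \<open>Separating codes\<close>

text \<open>Separation is the part of the identifying-code property that drives the lower bound.\<close>

definition separating :: "nat \<Rightarrow> nat \<Rightarrow> (nat \<times> nat) set \<Rightarrow> bool" where
  "separating n m C \<longleftrightarrow> C \<subseteq> {1..n} \<times> {1..m} \<and>
     (\<forall>x \<in> {1..n} \<times> {1..m}. \<forall>y \<in> {1..n} \<times> {1..m}. code_nbhd C x = code_nbhd C y \<longrightarrow> x = y)"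

lemma separatingD:
  "separating n m C \<Longrightarrow> x \<in> {1..n} \<times> {1..m} \<Longrightarrow> y \<in> {1..n} \<times> {1..m} \<Longrightarrow>
    code_nbhd C x = code_nbhd C y \<Longrightarrow> x = y"
  unfolding separating_def by blast

lemma separating_subset: "separating n m C \<Longrightarrow> C \<subseteq> {1..n} \<times> {1..m}"
  unfolding separating_def by blast

lemma code_nbhd_swap: "code_nbhd (prod.swap ` C) (prod.swap x) = prod.swap ` code_nbhd C x"
  unfolding code_nbhd_def by (cases x) (auto simp: image_iff)

lemma separating_swap:
  assumes "separating n m C"
  shows "separating m n (prod.swap ` C)"
  unfolding separating_def
proof (intro conjI ballI impI)
  show "prod.swap ` C \<subseteq> {1..m} \<times> {1..n}"
    using separating_subset[OF assms] by auto
  fix x y assume xy: "x \<in> {1..m} \<times> {1..n}" "y \<in> {1..m} \<times> {1..n}"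
    and eq: "code_nbhd (prod.swap ` C) x = code_nbhd (prod.swap ` C) y"
  have "prod.swap ` code_nbhd C (prod.swap x) = prod.swap ` code_nbhd C (prod.swap y)"
    using eq code_nbhd_swap[of C "prod.swap x"] code_nbhd_swap[of C "prod.swap y"] by simp
  then have "code_nbhd C (prod.swap x) = code_nbhd C (prod.swap y)"
    by (simp add: inj_image_eq_iff)
  then have "prod.swap x = prod.swap y"
    using separatingD[OF assms] xy by auto
  then show "x = y" by (metis swap_swap)
qed

text \<open>Two empty rows i, i' would make (i, 1) and (i', 1) indistinguishable.\<close>

lemma separating_one_empty_row:
  assumes sep: "separating n m C" and "1 \<le> m"
  shows "card {i \<in> {1..n}. row C i = {}} \<le> 1"
proof -
  have "i = i'" if "i \<in> {1..n}" "i' \<in> {1..n}" "row C i = {}" "row C i' = {}" for i i'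
  proof -
    have "code_nbhd C (i, 1) = code_nbhd C (i', 1)"
      using row_eqD[OF that(3)] row_eqD[OF that(4)] unfolding code_nbhd_def by auto
    moreover have "(i, 1) \<in> {1..n} \<times> {1..m}" "(i', 1) \<in> {1..n} \<times> {1..m}"
      using that \<open>1 \<le> m\<close> by auto
    ultimately show "i = i'" using separatingD[OF sep] by blast
  qed
  then show ?thesis by (auto simp: card_le_Suc0_iff_eq)
qed

text \<open>Two isolated points (i, j), (k, l) would make (i, l) and (k, j) indistinguishable.\<close>

lemma separating_one_isolated:
  assumes sep: "separating n m C" and iso: "isolated C i j" "isolated C k l"
  shows "(i, j) = (k, l)"
proof (rule ccontr)
  assume ne: "(i, j) \<noteq> (k, l)"
  note facts = iso[unfolded isolated_def]
  have in_C: "(i, j) \<in> C" "(k, l) \<in> C" using iso by (auto intro: isolated_mem)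
  have "i \<noteq> k" "j \<noteq> l" using ne in_C row_eqD[of C i "{j}"] col_eqD[of C j "{i}"] facts by auto
  then have "code_nbhd C (i, l) = code_nbhd C (k, j)"
    using facts unfolding code_nbhd_def by (auto dest: row_eqD col_eqD)
  moreover have "(i, l) \<in> {1..n} \<times> {1..m}" "(k, j) \<in> {1..n} \<times> {1..m}"
    using in_C separating_subset[OF sep] by auto
  ultimately show False using separatingD[OF sep] \<open>i \<noteq> k\<close> by blast
qed

text \<open>An isolated point (i, j), an empty row k and an empty column l cannot coexist:
  (i, l) and (k, j) would be indistinguishable.\<close>

lemma separating_no_isolated_with_empty_lines:
  assumes sep: "separating n m C" and iso: "isolated C i j"
    and k: "k \<in> {1..n}" "row C k = {}" and l: "l \<in> {1..m}" "col C l = {}"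
  shows False
proof -
  have in_C: "(i, j) \<in> C" using iso by (rule isolated_mem)
  have "i \<noteq> k" "j \<noteq> l" using in_C k(2) l(2) by auto
  then have "code_nbhd C (i, l) = code_nbhd C (k, j)"
    using iso k(2) l(2) unfolding isolated_def code_nbhd_def by (auto dest: row_eqD col_eqD)
  moreover have "(i, l) \<in> {1..n} \<times> {1..m}" "(k, j) \<in> {1..n} \<times> {1..m}"
    using in_C separating_subset[OF sep] k l by auto
  ultimately show False using separatingD[OF sep] \<open>i \<noteq> k\<close> by blast
qed

text \<open>If some row k is empty, a row {j1, j2} of size two cannot have both of its columns
  consisting of that row's points only: (i, j1) and (k, j2) would be indistinguishable.\<close>

lemma separating_no_private_pair_with_empty_row:
  assumes sep: "separating n m C" and k: "k \<in> {1..n}" "row C k = {}"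
    and pair: "row C i = {j1, j2}" "j1 \<noteq> j2" and alone: "col C j1 = {i}" "col C j2 = {i}"
  shows False
proof -
  have in_C: "(i, j1) \<in> C" "(i, j2) \<in> C" using pair(1) by (auto dest: row_eqD)
  have "i \<noteq> k" using in_C k(2) by auto
  then have "code_nbhd C (i, j1) = code_nbhd C (k, j2)"
    using pair alone k(2) unfolding code_nbhd_def by (auto dest: row_eqD col_eqD)
  moreover have "(i, j1) \<in> {1..n} \<times> {1..m}" "(k, j2) \<in> {1..n} \<times> {1..m}"
    using in_C separating_subset[OF sep] k by auto
  ultimately show False using separatingD[OF sep] \<open>i \<noteq> k\<close> by blast
qed

section \<open>The lower bound\<close>

text \<open>Points lying in columns of degree one ("private" points), counted inside a single
  row i: a row of degree one contributes at most its isolated point, a heavy row at most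
  its degree, and at most one if the row has degree two and some row is empty.\<close>

lemma private_columns_in_row:
  assumes sep: "separating n m C" and i: "i \<in> {1..n}"
  defines "E \<equiv> \<exists>k \<in> {1..n}. row C k = {}"
  shows "card {j \<in> row C i. cdeg C j = 1} + (if E \<and> rdeg C i = 2 then 1 else 0)
    \<le> card {j \<in> row C i. isolated C i j} + (if 2 \<le> rdeg C i then rdeg C i else 0)"
proof -
  have fin: "finite (row C i)"
    using separating_subset[OF sep] by (intro finite_row) (auto intro: finite_subset)
  have le_deg: "card {j \<in> row C i. cdeg C j = 1} \<le> rdeg C i"
    unfolding rdeg_def using fin by (intro card_mono) auto
  consider "rdeg C i = 0" | "rdeg C i = 1" | "rdeg C i = 2" | "3 \<le> rdeg C i" by linarith
  then show ?thesis
  proof cases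
    case 1 then show ?thesis using le_deg by simp
  next
    case 2
    then obtain j where j: "row C i = {j}" unfolding rdeg_def by (auto simp: card_1_singleton_iff)
    have "i \<in> col C j" using j by (metis mem_col mem_row singletonI)
    then have "cdeg C j = 1 \<Longrightarrow> isolated C i j"
      using j by (simp add: isolated_def cdeg_def card_one_memberD)
    then have "{j' \<in> row C i. cdeg C j' = 1} \<subseteq> {j' \<in> row C i. isolated C i j'}"
      using j by auto
    then have "card {j' \<in> row C i. cdeg C j' = 1} \<le> card {j' \<in> row C i. isolated C i j'}"
      by (rule card_mono[rotated]) (rule finite_subset[OF _ fin], auto)
    then show ?thesis using 2 by simp
  next
    case 3
    have "card {j \<in> row C i. cdeg C j = 1} \<le> 1" if E
    proof (rule ccontr)
      assume "\<not> ?thesis"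
      then have all: "{j \<in> row C i. cdeg C j = 1} = row C i"
        using le_deg 3 fin by (intro card_subset_eq) (auto simp: rdeg_def)
      obtain j1 j2 where pair: "row C i = {j1, j2}" "j1 \<noteq> j2"
        using 3 unfolding rdeg_def by (auto simp: card_2_iff)
      have "cdeg C j1 = 1" "cdeg C j2 = 1"
        using all pair(1) by blast+
      moreover have "i \<in> col C j1" "i \<in> col C j2"
        using pair(1) by (simp_all add: row_eqD)
      ultimately have "col C j1 = {i}" "col C j2 = {i}"
        by (simp_all add: cdeg_def card_one_memberD)
      moreover obtain k where "k \<in> {1..n}" "row C k = {}" using \<open>E\<close> E_def by blast
      ultimately show False
        using separating_no_private_pair_with_empty_row[OF sep _ _ pair] by blast
    qed
    then show ?thesis using 3 le_deg by auto
  next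
    case 4 then show ?thesis using le_deg by simp
  qed
qed

lemma separating_private_columns:
  assumes sep: "separating n m C"
  defines "E \<equiv> 1 \<le> count_deg {1..n} (rdeg C) 0"
  shows "count_deg {1..m} (cdeg C) 1 + (if E then count_deg {1..n} (rdeg C) 2 else 0)
    \<le> card (isolated_set C) + sum_heavy {1..n} (rdeg C)"
proof -
  have sub: "C \<subseteq> {1..n} \<times> {1..m}" by (rule separating_subset[OF sep])
  then have fin_C: "finite C" by (rule finite_subset) simp
  note fin = fin_C finite_row[OF fin_C]
  have E_iff: "E \<longleftrightarrow> (\<exists>k \<in> {1..n}. row C k = {})"
    unfolding E_def count_empty_rows[OF fin_C] by (auto simp: Suc_le_eq card_gt_0_iff)
  let ?private = "\<lambda>j. if cdeg C j = 1 then 1 else (0::nat)"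
  have "count_deg {1..m} (cdeg C) 1 = (\<Sum>j\<in>{1..m}. \<Sum>i\<in>col C j. ?private j)"
    unfolding count_deg_def card_filter_as_sum[OF finite_atLeastAtMost]
    by (rule sum.cong) (auto simp: cdeg_def)
  also have "\<dots> = (\<Sum>x\<in>C. ?private (snd x))"
    using sum_by_cols[OF sub, of "\<lambda>x. ?private (snd x)"] by simp
  also have "\<dots> = (\<Sum>i\<in>{1..n}. \<Sum>j\<in>row C i. ?private j)"
    using sum_by_rows[OF sub, of "\<lambda>x. ?private (snd x)"] by simp
  also have "\<dots> = (\<Sum>i\<in>{1..n}. card {j \<in> row C i. cdeg C j = 1})"
    by (simp only: card_filter_as_sum[OF fin(2)])
  finally have private_count: "count_deg {1..m} (cdeg C) 1 = \<dots>" .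
  have "card (isolated_set C) = (\<Sum>x\<in>C. if isolated C (fst x) (snd x) then 1 else 0)"
  proof -
    have "isolated_set C = {x \<in> C. isolated C (fst x) (snd x)}"
      by (auto simp: isolated_set_def isolated_mem)
    then show ?thesis by (simp add: card_filter_as_sum[OF fin(1)])
  qed
  also have "\<dots> = (\<Sum>i\<in>{1..n}. \<Sum>j\<in>row C i. if isolated C i j then 1 else 0)"
    using sum_by_rows[OF sub, of "\<lambda>x. if isolated C (fst x) (snd x) then 1 else 0"] by simp
  also have "\<dots> = (\<Sum>i\<in>{1..n}. card {j \<in> row C i. isolated C i j})"
    by (simp only: card_filter_as_sum[OF fin(2)])
  finally have isolated_count: "card (isolated_set C) = \<dots>" .
  have "(\<Sum>i\<in>{1..n}. card {j \<in> row C i. cdeg C j = 1} + (if E \<and> rdeg C i = 2 then 1 else 0))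
      \<le> (\<Sum>i\<in>{1..n}. card {j \<in> row C i. isolated C i j} + (if 2 \<le> rdeg C i then rdeg C i else 0))"
    using private_columns_in_row[OF sep] E_iff by (intro sum_mono) simp
  moreover have "(\<Sum>i\<in>{1..n}. if E \<and> rdeg C i = 2 then 1 else 0)
      = (if E then count_deg {1..n} (rdeg C) 2 else 0)"
    unfolding count_deg_def card_filter_as_sum[OF finite_atLeastAtMost] by simp
  moreover have "sum_heavy {1..n} (rdeg C) = (\<Sum>i\<in>{1..n}. if 2 \<le> rdeg C i then rdeg C i else 0)"
    unfolding sum_heavy_def by (rule sum.inter_filter) simp
  ultimately show ?thesis
    unfolding private_count isolated_count sum.distrib by simp
qed

lemma separating_isolated_bounds:
  assumes sep: "separating n m C"
  shows "card (isolated_set C) \<le> 1"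
    and "\<not> (1 \<le> card (isolated_set C) \<and> 1 \<le> count_deg {1..n} (rdeg C) 0
            \<and> 1 \<le> count_deg {1..m} (cdeg C) 0)"
proof -
  have sub: "C \<subseteq> {1..n} \<times> {1..m}" by (rule separating_subset[OF sep])
  then have fin: "finite C" by (rule finite_subset) simp
  have "finite (isolated_set C)"
    by (rule finite_subset[OF _ fin]) (auto simp: isolated_set_def isolated_mem)
  moreover have "x = y" if "x \<in> isolated_set C" "y \<in> isolated_set C" for x y
    using that separating_one_isolated[OF sep] by (auto simp: isolated_set_def)
  ultimately show "card (isolated_set C) \<le> 1" by (simp add: card_le_Suc0_iff_eq)
  show "\<not> (1 \<le> card (isolated_set C) \<and> 1 \<le> count_deg {1..n} (rdeg C) 0
            \<and> 1 \<le> count_deg {1..m} (cdeg C) 0)"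
  proof
    assume "1 \<le> card (isolated_set C) \<and> 1 \<le> count_deg {1..n} (rdeg C) 0
            \<and> 1 \<le> count_deg {1..m} (cdeg C) 0"
    then have "1 \<le> card (isolated_set C)" "1 \<le> card {i \<in> {1..n}. row C i = {}}"
      "1 \<le> card {j \<in> {1..m}. col C j = {}}"
      using count_empty_rows[OF fin] count_empty_rows[of "prod.swap ` C"] fin by auto
    then have "isolated_set C \<noteq> {}" "{i \<in> {1..n}. row C i = {}} \<noteq> {}"
      "{j \<in> {1..m}. col C j = {}} \<noteq> {}"
      by (metis card.empty not_one_le_zero)+
    then show False
      using separating_no_isolated_with_empty_lines[OF sep] by (auto simp: isolated_set_def)
  qed
qed

text \<open>For the rows, Er/Lr/Hr count the
  rows of degree 0, 1 and at least 2, Tr those of degree exactly 2 and Sr is the total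
  degree of the heavy rows; the column quantities are analogous, K is the number of
  isolated points and N the size of the code.\<close>

lemma lower_bound_arith:
  fixes n m N K Er Lr Hr Tr Sr Ec Lc Hc Tc Sc :: nat
  assumes rows: "n = Er + Lr + Hr" "N = Lr + Sr" "3 * Hr \<le> Sr + Tr" "2 * Hr \<le> Sr"
      "Hr = 0 \<Longrightarrow> Sr = 0" "Er \<le> 1"
    and cols: "m = Ec + Lc + Hc" "N = Lc + Sc" "3 * Hc \<le> Sc + Tc" "2 * Hc \<le> Sc"
      "Hc = 0 \<Longrightarrow> Sc = 0" "Ec \<le> 1"
    and private_rows: "Lc + (if 1 \<le> Er then Tr else 0) \<le> K + Sr"
    and private_cols: "Lr + (if 1 \<le> Ec then Tc else 0) \<le> K + Sc"
    and isolated_bounds: "K \<le> 1" "\<not> (1 \<le> K \<and> 1 \<le> Er \<and> 1 \<le> Ec)"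
    and size: "6 \<le> n" "n \<le> m" "m \<le> 2 * n - 1"
  shows "2 * (n + m) \<le> 3 * N + 2"
proof -
  consider "Er = 1" "Ec = 1" | "Er = 1" "Ec = 0" | "Er = 0" "Ec = 1" | "Er = 0" "Ec = 0"
    using rows(6) cols(6) by linarith
  then show ?thesis
  proof cases
    case 1 then show ?thesis using assms by simp
  next
    case 2 then show ?thesis using assms by (cases "Hr = 0") simp_all
  next
    case 3 then show ?thesis using assms by (cases "Hc = 0") simp_all
  next
    case 4 then show ?thesis using assms by simp
  qed
qed

theorem separating_lower_bound:
  assumes sep: "separating n m C" and size: "6 \<le> n" "n \<le> m" "m \<le> 2 * n - 1"
  shows "2 * (n + m) \<le> 3 * card C + 2"
proof -
  have sep_swap: "separating m n (prod.swap ` C)" by (rule separating_swap[OF sep])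
  have sub: "C \<subseteq> {1..n} \<times> {1..m}" by (rule separating_subset[OF sep])
  then have fin: "finite C" by (rule finite_subset) simp
  have card_rows: "card C = sum (rdeg C) {1..n}" by (rule card_by_rows[OF sub])
  have card_cols: "card C = sum (cdeg C) {1..m}"
    using card_by_rows[OF separating_subset[OF sep_swap]] fin by (simp add: card_image)
  have empty_rows: "count_deg {1..n} (rdeg C) 0 \<le> 1"
    using separating_one_empty_row[OF sep] count_empty_rows[OF fin] size by simp
  have empty_cols: "count_deg {1..m} (cdeg C) 0 \<le> 1"
    using separating_one_empty_row[OF sep_swap] count_empty_rows[of "prod.swap ` C"] fin size
    by simp
  note private_rows = separating_private_columns[OF sep]
  note private_cols = separating_private_columns[OF sep_swap, unfolded rdeg_swap cdeg_swap
      card_isolated_set_swap]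
  note row_stats = degree_statistics[where A = "{1..n}" and d = "rdeg C", OF finite_atLeastAtMost]
  note col_stats = degree_statistics[where A = "{1..m}" and d = "cdeg C", OF finite_atLeastAtMost]
  have card_intervals: "card {1..n} = n" "card {1..m} = m" by simp_all
  show ?thesis
    by (rule lower_bound_arith[OF row_stats(1)[unfolded card_intervals] row_stats(2)[folded card_rows]
          row_stats(3-5) empty_rows col_stats(1)[unfolded card_intervals] col_stats(2)[folded card_cols]
          col_stats(3-5) empty_cols private_rows private_cols separating_isolated_bounds[OF sep]
          size])
qed

section \<open>A sufficient criterion for identifying codes\<close>

text \<open>If every row and column holds at most two code vertices and the code has at least
  five, then no vertex is blind: otherwise the whole code would lie on one row and one
  column through it.\<close>

lemma line_conditions_dominate:
  assumes fin: "finite C" and rows: "\<And>i. card (row C i) \<le> 2" and cols: "\<And>j. card (col C j) \<le> 2"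
    and big: "5 \<le> card C"
  shows "code_nbhd C x \<noteq> {}"
proof
  assume empty: "code_nbhd C x = {}"
  obtain r s where x: "x = (r, s)" by fastforce
  have "C \<subseteq> Pair r ` row C r \<union> (\<lambda>i. (i, s)) ` col C s"
  proof
    fix y assume "y \<in> C"
    obtain a b where y: "y = (a, b)" by fastforce
    have "y \<notin> code_nbhd C x" using empty by simp
    then have "a = r \<or> b = s" using \<open>y \<in> C\<close> unfolding x y code_nbhd_def by auto
    then show "y \<in> Pair r ` row C r \<union> (\<lambda>i. (i, s)) ` col C s"
      using \<open>y \<in> C\<close> y by auto
  qed
  moreover have fin_lines: "finite (row C r)" "finite (col C s)"
    using finite_row[OF fin] finite_row[of "prod.swap ` C"] fin by auto
  ultimately have "card C \<le> card (Pair r ` row C r \<union> (\<lambda>i. (i, s)) ` col C s)"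
    by (intro card_mono) simp_all
  also have "\<dots> \<le> card (Pair r ` row C r) + card ((\<lambda>i. (i, s)) ` col C s)"
    by (rule card_Un_le)
  also have "\<dots> \<le> card (row C r) + card (col C s)"
    using fin_lines by (intro add_mono card_image_le)
  also have "\<dots> \<le> 4" using rows[of r] cols[of s] by simp
  finally show False using big by simp
qed

text \<open>For two vertices on a
  common line, a code vertex on the other line through them separates them.  Otherwise an
  unseparated pair forces all code vertices on the four lines through x and y onto the
  corners of the rectangle spanned by x and y, and the conditions leave no admissible
  choice of corners.\<close>

lemma line_conditions_separate:
  assumes rows: "\<And>i. i \<in> {1..n} \<Longrightarrow> row C i \<noteq> {}"
    and cols: "\<And>j. j \<in> {1..m} \<Longrightarrow> col C j \<noteq> {}"
    and alone: "\<And>i j. (i, j) \<in> C \<Longrightarrow> row C i = {j} \<or> col C j = {i}"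
    and unique: "\<And>i j k l. isolated C i j \<Longrightarrow> isolated C k l \<Longrightarrow> (i, j) = (k, l)"
    and x: "x \<in> {1..n} \<times> {1..m}" and y: "y \<in> {1..n} \<times> {1..m}" and "x \<noteq> y"
  shows "code_nbhd C x \<noteq> code_nbhd C y"
proof
  assume eq: "code_nbhd C x = code_nbhd C y"
  obtain r s r' s' where xy: "x = (r, s)" "y = (r', s')" by fastforce
  have same: "((p, q) = (r, s) \<or> p \<noteq> r \<and> q \<noteq> s) \<longleftrightarrow> ((p, q) = (r', s') \<or> p \<noteq> r' \<and> q \<noteq> s')"
    if "(p, q) \<in> C" for p q
    using eq that unfolding xy code_nbhd_def by (auto simp: set_eq_iff)
  consider "r = r'" | "s = s'" | "r \<noteq> r'" "s \<noteq> s'" by blast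
  then show False
  proof cases
    case 1
    obtain u where "(u, s) \<in> C" using cols x xy by fastforce
    then show False using same[of u s] 1 \<open>x \<noteq> y\<close> xy by auto
  next
    case 2
    obtain t where "(r, t) \<in> C" using rows x xy by fastforce
    then show False using same[of r t] 2 \<open>x \<noteq> y\<close> xy by auto
  next
    case 3
    have lines: "row C r \<subseteq> {s, s'}" "row C r' \<subseteq> {s, s'}" "col C s \<subseteq> {r, r'}" "col C s' \<subseteq> {r, r'}"
      using same 3 by fastforce+
    let ?X = "(r, s) \<in> C" and ?P = "(r, s') \<in> C" and ?Y = "(r', s') \<in> C" and ?Q = "(r', s) \<in> C"
    have "row C r \<noteq> {}" "row C r' \<noteq> {}" "col C s \<noteq> {}" "col C s' \<noteq> {}"
      using rows cols x y unfolding xy by auto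
    then have cover: "?X \<or> ?P" "?Q \<or> ?Y" "?X \<or> ?Q" "?P \<or> ?Y"
      using lines by fastforce+
    have row_single: "row C a = {b} \<longleftrightarrow> (a, b) \<in> C \<and> (a, b') \<notin> C"
      if "row C a \<subseteq> {b, b'}" "b \<noteq> b'" for a b b'
      using that by auto
    have col_single: "col C b = {a} \<longleftrightarrow> (a, b) \<in> C \<and> (a', b) \<notin> C"
      if "col C b \<subseteq> {a, a'}" "a \<noteq> a'" for a a' b
      using that by auto
    have lines': "row C r \<subseteq> {s', s}" "row C r' \<subseteq> {s', s}" "col C s \<subseteq> {r', r}" "col C s' \<subseteq> {r', r}"
      using lines by auto
    note single = row_single[OF lines(1) 3(2)] row_single[OF lines'(1) 3(2)[symmetric]]
      row_single[OF lines(2) 3(2)] row_single[OF lines'(2) 3(2)[symmetric]]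
      col_single[OF lines(3) 3(1)] col_single[OF lines'(3) 3(1)[symmetric]]
      col_single[OF lines(4) 3(1)] col_single[OF lines'(4) 3(1)[symmetric]]
    have corners: "?X \<Longrightarrow> \<not> ?P \<or> \<not> ?Q" "?P \<Longrightarrow> \<not> ?X \<or> \<not> ?Y"
      "?Y \<Longrightarrow> \<not> ?Q \<or> \<not> ?P" "?Q \<Longrightarrow> \<not> ?Y \<or> \<not> ?X"
      using alone[of r s] alone[of r s'] alone[of r' s'] alone[of r' s] single by blast+
    have corner_isolated: "isolated C r s \<longleftrightarrow> ?X \<and> \<not> ?P \<and> \<not> ?Q"
      "isolated C r' s' \<longleftrightarrow> ?Y \<and> \<not> ?Q \<and> \<not> ?P"
      "isolated C r s' \<longleftrightarrow> ?P \<and> \<not> ?X \<and> \<not> ?Y"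
      "isolated C r' s \<longleftrightarrow> ?Q \<and> \<not> ?Y \<and> \<not> ?X"
      unfolding isolated_def single by blast+
    have diagonals: "\<not> (?X \<and> ?Y \<and> \<not> ?P \<and> \<not> ?Q)" "\<not> (?P \<and> ?Q \<and> \<not> ?X \<and> \<not> ?Y)"
    proof -
      show "\<not> (?X \<and> ?Y \<and> \<not> ?P \<and> \<not> ?Q)"
      proof
        assume "?X \<and> ?Y \<and> \<not> ?P \<and> \<not> ?Q"
        then have "(r, s) = (r', s')" using corner_isolated(1,2) unique by blast
        with 3 show False by simp
      qed
      show "\<not> (?P \<and> ?Q \<and> \<not> ?X \<and> \<not> ?Y)"
      proof
        assume "?P \<and> ?Q \<and> \<not> ?X \<and> \<not> ?Y"
        then have "(r, s') = (r', s)" using corner_isolated(3,4) unique by blast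
        with 3 show False by simp
      qed
    qed
    show False using cover corners diagonals by blast
  qed
qed

lemma id_code_from_line_conditions:
  assumes sub: "C \<subseteq> {1..n} \<times> {1..m}"
    and rows: "\<And>i. i \<in> {1..n} \<Longrightarrow> row C i \<noteq> {}"
    and cols: "\<And>j. j \<in> {1..m} \<Longrightarrow> col C j \<noteq> {}"
    and alone: "\<And>i j. (i, j) \<in> C \<Longrightarrow> row C i = {j} \<or> col C j = {i}"
    and unique: "\<And>i j k l. isolated C i j \<Longrightarrow> isolated C k l \<Longrightarrow> (i, j) = (k, l)"
    and row_card: "\<And>i. card (row C i) \<le> 2" and col_card: "\<And>j. card (col C j) \<le> 2"
    and big: "5 \<le> card C"
  shows "is_id_code (dprod_vert (K_vert n) (K_vert m)) (dprod_adj K_adj K_adj) C"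
proof -
  have "finite C" using sub by (rule finite_subset) simp
  then show ?thesis
    unfolding id_code_Kprod_iff
    using sub line_conditions_dominate[OF _ row_card col_card big]
      line_conditions_separate[OF rows cols alone unique] by blast
qed

section \<open>The construction\<close>

text \<open>For n = a + 2b + k and m = 2a + b + k: each of the first a rows r carries the two
  points (r, r) and (r, a + r), each of the next b columns c carries two points in rows
  c - a and c - a + b, and for k = 1 the remaining corner (n, m) is added.\<close>

definition grid_code :: "nat \<Rightarrow> nat \<Rightarrow> nat \<Rightarrow> (nat \<times> nat) set" where
  "grid_code a b k = {(r, c).
     (1 \<le> r \<and> r \<le> a \<and> (c = r \<or> c = a + r)) \<or>
     (2 * a < c \<and> c \<le> 2 * a + b \<and> (r + a = c \<or> r + a = c + b)) \<or>
     (k = 1 \<and> r = a + 2 * b + 1 \<and> c = 2 * a + b + 1)}"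

context
  fixes a b k :: nat
  assumes k: "k \<le> 1"
begin

lemma grid_code_subset: "grid_code a b k \<subseteq> {1..a + 2 * b + k} \<times> {1..2 * a + b + k}"
  using k unfolding grid_code_def by auto

lemma grid_code_row_low: "1 \<le> r \<Longrightarrow> r \<le> a \<Longrightarrow> row (grid_code a b k) r = {r, a + r}"
  unfolding grid_code_def row_def by auto

lemma grid_code_row_high:
  assumes "a < r" "r \<le> a + 2 * b + k"
  shows "\<exists>c. 2 * a < c \<and> row (grid_code a b k) r = {c}"
proof -
  consider "r \<le> a + b" | "a + b < r" "r \<le> a + 2 * b" | "k = 1" "r = a + 2 * b + 1"
    using assms k by linarith
  then show ?thesis
  proof cases
    case 1
    then have "row (grid_code a b k) r = {r + a}" using assms unfolding grid_code_def row_def by auto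
    then show ?thesis using assms by auto
  next
    case 2
    then have "row (grid_code a b k) r = {r + a - b}" using assms unfolding grid_code_def row_def by auto
    then show ?thesis using 2 by auto
  next
    case 3
    then have "row (grid_code a b k) r = {2 * a + b + 1}" unfolding grid_code_def row_def by auto
    then show ?thesis by auto
  qed
qed

lemma grid_code_col_low:
  assumes "1 \<le> c" "c \<le> 2 * a"
  shows "\<exists>r. col (grid_code a b k) c = {r}"
proof (cases "c \<le> a")
  case True
  then have "col (grid_code a b k) c = {c}" using assms unfolding grid_code_def col_def by auto
  then show ?thesis by blast
next
  case False
  then have "col (grid_code a b k) c = {c - a}" using assms unfolding grid_code_def col_def by auto
  then show ?thesis by blast
qed

lemma grid_code_col_mid:
  "2 * a < c \<Longrightarrow> c \<le> 2 * a + b \<Longrightarrow> col (grid_code a b k) c = {c - a, c - a + b}"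
  unfolding grid_code_def col_def by auto

lemma grid_code_col_top: "k = 1 \<Longrightarrow> col (grid_code a b k) (2 * a + b + 1) = {a + 2 * b + 1}"
  unfolding grid_code_def col_def by auto

lemma grid_code_row_outside: "i \<notin> {1..a + 2 * b + k} \<Longrightarrow> row (grid_code a b k) i = {}"
  using grid_code_subset by auto

lemma grid_code_col_outside: "j \<notin> {1..2 * a + b + k} \<Longrightarrow> col (grid_code a b k) j = {}"
  using grid_code_subset by auto

lemma grid_code_rows_nonempty: "i \<in> {1..a + 2 * b + k} \<Longrightarrow> row (grid_code a b k) i \<noteq> {}"
  using grid_code_row_low[of i] grid_code_row_high[of i] by (cases "i \<le> a") auto

lemma grid_code_cols_nonempty:
  assumes "j \<in> {1..2 * a + b + k}"
  shows "col (grid_code a b k) j \<noteq> {}"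
proof -
  consider "j \<le> 2 * a" | "2 * a < j" "j \<le> 2 * a + b" | "k = 1" "j = 2 * a + b + 1"
    using assms k by fastforce
  then show ?thesis
    using assms grid_code_col_low[of j] grid_code_col_mid[of j] grid_code_col_top by cases auto
qed

lemma grid_code_line_cards:
  "card (row (grid_code a b k) i) \<le> 2" "card (col (grid_code a b k) j) \<le> 2"
proof -
  show "card (row (grid_code a b k) i) \<le> 2"
  proof (cases "1 \<le> i \<and> i \<le> a")
    case True then show ?thesis using grid_code_row_low[of i] by (simp add: card_insert_le_m1)
  next
    case False
    then show ?thesis
      using grid_code_row_high[of i] grid_code_row_outside[of i]
      by (cases "a < i \<and> i \<le> a + 2 * b + k") auto
  qed
  consider "1 \<le> j \<and> j \<le> 2 * a" | "2 * a < j \<and> j \<le> 2 * a + b" | "k = 1 \<and> j = 2 * a + b + 1"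
    | "j \<notin> {1..2 * a + b + k}"
    using k by fastforce
  then show "card (col (grid_code a b k) j) \<le> 2"
    using grid_code_col_low[of j] grid_code_col_mid[of j] grid_code_col_top grid_code_col_outside[of j]
    by cases (auto simp: card_insert_le_m1)
qed

text \<open>Points in the first a rows lie in columns of degree one; all other points lie in
  rows of degree one.\<close>

lemma grid_code_alone:
  assumes ij: "(i, j) \<in> grid_code a b k"
  shows "row (grid_code a b k) i = {j} \<or> col (grid_code a b k) j = {i}"
proof -
  have i: "1 \<le> i" "i \<le> a + 2 * b + k" using grid_code_subset ij by auto
  have j: "j \<in> row (grid_code a b k) i" using ij by simp
  show ?thesis
  proof (cases "i \<le> a")
    case True
    then have "j \<in> {i, a + i}" using j grid_code_row_low[OF i(1)] by simp
    then obtain r where "col (grid_code a b k) j = {r}"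
      using grid_code_col_low[of j] True i(1) by auto
    then show ?thesis using ij by auto
  next
    case False
    then have "a < i" by simp
    then obtain c where "row (grid_code a b k) i = {c}"
      using grid_code_row_high[OF _ i(2)] by blast
    then show ?thesis using j by auto
  qed
qed

lemma grid_code_isolated:
  assumes iso: "isolated (grid_code a b k) i j"
  shows "(i, j) = (a + 2 * b + 1, 2 * a + b + 1)"
proof -
  have row: "row (grid_code a b k) i = {j}" and col: "col (grid_code a b k) j = {i}"
    using iso unfolding isolated_def by auto
  have ij: "(i, j) \<in> grid_code a b k" using iso by (rule isolated_mem)
  then have i: "1 \<le> i" "i \<le> a + 2 * b + k" and j: "j \<le> 2 * a + b + k"
    using grid_code_subset by auto
  have "a < i"
  proof (rule ccontr)
    assume "\<not> a < i"
    then have "{i, a + i} = {j}" using row grid_code_row_low[OF i(1)] by simp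
    then have "i = j" "a + i = j" by blast+
    then show False using i(1) \<open>\<not> a < i\<close> by linarith
  qed
  then obtain c where "2 * a < c" "row (grid_code a b k) i = {c}"
    using grid_code_row_high[OF _ i(2)] by blast
  then have "2 * a < j" using row by simp
  have "\<not> j \<le> 2 * a + b"
  proof
    assume "j \<le> 2 * a + b"
    then have "{j - a, j - a + b} = {i}" "0 < b"
      using col grid_code_col_mid[OF \<open>2 * a < j\<close>] \<open>2 * a < j\<close> by auto
    then have "j - a = i" "j - a + b = i" by blast+
    then show False using \<open>0 < b\<close> by linarith
  qed
  then have "k = 1" "j = 2 * a + b + 1" using j k by auto
  then show ?thesis using col grid_code_col_top by auto
qed

lemma grid_code_card: "card (grid_code a b k) = 2 * a + 2 * b + k"
proof -
  have rdeg: "rdeg (grid_code a b k) i = 1 + (if i \<le> a then 1 else 0)"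
    if i: "i \<in> {1..a + 2 * b + k}" for i
  proof (cases "i \<le> a")
    case True then show ?thesis using i grid_code_row_low[of i] by (simp add: rdeg_def)
  next
    case False
    then obtain c where "row (grid_code a b k) i = {c}"
      using grid_code_row_high[of i] i by auto
    then show ?thesis using False by (simp add: rdeg_def)
  qed
  have "card (grid_code a b k) = (\<Sum>i\<in>{1..a + 2 * b + k}. 1 + (if i \<le> a then 1 else 0))"
    using card_by_rows[OF grid_code_subset] rdeg by simp
  also have "\<dots> = (a + 2 * b + k) + card {i \<in> {1..a + 2 * b + k}. i \<le> a}"
    unfolding sum.distrib card_filter_as_sum[OF finite_atLeastAtMost] by simp
  also have "{i \<in> {1..a + 2 * b + k}. i \<le> a} = {1..a}" by auto
  finally show ?thesis by simp
qed

theorem grid_code_id_code: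
  assumes "5 \<le> a + 2 * b + k"
  shows "is_id_code (dprod_vert (K_vert (a + 2 * b + k)) (K_vert (2 * a + b + k)))
           (dprod_adj K_adj K_adj) (grid_code a b k)"
proof (rule id_code_from_line_conditions[OF grid_code_subset grid_code_rows_nonempty
      grid_code_cols_nonempty grid_code_alone _ grid_code_line_cards])
  show "5 \<le> card (grid_code a b k)" using assms by (simp add: grid_code_card)
qed (auto dest: grid_code_isolated)

end

lemma gamma_ID_eqI:
  assumes "finite V" and code: "is_id_code V E C0" "card C0 = g"
    and lower: "\<And>C. is_id_code V E C \<Longrightarrow> g \<le> card C"
  shows "gamma_ID V E = g"
proof -
  have "{card C | C. is_id_code V E C} \<subseteq> card ` Pow V"
    unfolding is_id_code_def by auto
  then have "finite {card C | C. is_id_code V E C}"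
    by (rule finite_subset) (simp add: \<open>finite V\<close>)
  then show ?thesis
    unfolding gamma_ID_def using code lower by (intro Min_eqI) auto
qed

lemma grid_parameters:
  fixes n m :: nat
  assumes "6 \<le> n" and "n \<le> m" and "m \<le> 2 * n - 1"
    and "(n + m) mod 3 = 0 \<or> (n + m) mod 3 = 2"
  obtains a b k where "k \<le> 1" "n = a + 2 * b + k" "m = 2 * a + b + k"
    "(2 * m + 2 * n) div 3 = 2 * a + 2 * b + k"
proof -
  define k :: nat where "k = (if (n + m) mod 3 = 0 then 0 else 1)"
  define q where "q = (n + m) div 3"
  have "n + m = 3 * q + (n + m) mod 3" unfolding q_def by simp
  then have sum: "n + m = 3 * q + 2 * k"
    using assms(4) unfolding k_def by auto
  have "2 * m + 2 * n = 3 * (2 * q + k) + k" using sum by simp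
  then have "(2 * m + 2 * n) div 3 = 2 * q + k" unfolding k_def by auto
  moreover have "k \<le> 1" "n = (m - q - k) + 2 * (n - q - k) + k" "m = 2 * (m - q - k) + (n - q - k) + k"
    "2 * q + k = 2 * (m - q - k) + 2 * (n - q - k) + k"
    using sum assms(1-3) unfolding k_def by auto
  ultimately show ?thesis using that by metis
qed

theorem theorem3:
  fixes n m :: nat
  assumes "6 \<le> n" and "n \<le> m" and "m \<le> 2 * n - 1"
    and "(n + m) mod 3 = 0 \<or> (n + m) mod 3 = 2"
  shows "gamma_ID (dprod_vert (K_vert n) (K_vert m)) (dprod_adj K_adj K_adj)
           = (2 * m + 2 * n) div 3"
proof -
  obtain a b k where k: "k \<le> 1" and nm: "n = a + 2 * b + k" "m = 2 * a + b + k"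
    and optimum: "(2 * m + 2 * n) div 3 = 2 * a + 2 * b + k"
    using grid_parameters[OF assms] .
  show ?thesis
  proof (rule gamma_ID_eqI)
    show "finite (dprod_vert (K_vert n) (K_vert m))" by (simp add: dprod_vert_def K_vert_def)
    show "is_id_code (dprod_vert (K_vert n) (K_vert m)) (dprod_adj K_adj K_adj) (grid_code a b k)"
      using grid_code_id_code[OF k] assms(1) unfolding nm by simp
    show "card (grid_code a b k) = (2 * m + 2 * n) div 3"
      using grid_code_card[OF k] optimum by simp
  next
    fix C assume "is_id_code (dprod_vert (K_vert n) (K_vert m)) (dprod_adj K_adj K_adj) C"
    then have "separating n m C" unfolding id_code_Kprod_iff separating_def by blast
    then have "2 * (n + m) \<le> 3 * card C + 2" using separating_lower_bound assms by blast
    then show "(2 * m + 2 * n) div 3 \<le> card C" unfolding optimum nm by presburger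
  qed
qed

end
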